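(* Let $H\le G$ be finite groups, $Y$ an irreducible unitary representation of $H$, and $Y^{\uparrow}=\bigoplus_t t\otimes Y$ the induced unitary representation ($t$ ranging over left coset representatives of $H$). Let $V\neq0$ be a $G$-subrepresentation of $Y^{\uparrow}$ and $E$ the orthogonal projection onto $e\otimes Y\subseteq Y^{\uparrow}$. Then there exists a unit vector $\psi\in V$ with $$\langle\psi|E\psi\rangle=\frac{\dim V}{\dim Y^{\uparrow}}.$$
   Context: $Y^{\uparrow}=\mathbb{C}G\otimes_{\mathbb{C}H}Y$, equipped with the inner product for which the subspaces $t\otimes Y$ are pairwise orthogonal and each carries the inner product of $Y$; with it $Y^{\uparrow}$ is a unitary representation of $G$. *)

theory Defs
  imports "HOL-Algebra.Group" "HOL-Algebra.Coset" "HOL-Library.Function_Algebras" Complex_Main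
begin

text \<open>The representation space Y of H is modelled as C^n, i.e. functions 'n => complex
  for a finite index type 'n (so dim Y = CARD('n) >= 1), with the standard Hermitian
  inner product (conjugate-linear in the first argument).\<close>

definition cscale :: "complex \<Rightarrow> ('n \<Rightarrow> complex) \<Rightarrow> ('n \<Rightarrow> complex)" where
  "cscale c y = (\<lambda>i. c * y i)"

definition cinner :: "('n::finite \<Rightarrow> complex) \<Rightarrow> ('n \<Rightarrow> complex) \<Rightarrow> complex" where
  "cinner x y = (\<Sum>i\<in>UNIV. cnj (x i) * y i)"

definition unitary_rep ::
  "('g, 'b) monoid_scheme \<Rightarrow> 'g set \<Rightarrow> ('g \<Rightarrow> ('n::finite \<Rightarrow> complex) \<Rightarrow> ('n \<Rightarrow> complex)) \<Rightarrow> bool" where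
  "unitary_rep G H \<rho> \<longleftrightarrow>
     (\<forall>h\<in>H. Vector_Spaces.linear cscale cscale (\<rho> h)) \<and>
     (\<forall>h\<in>H. \<forall>x y. cinner (\<rho> h x) (\<rho> h y) = cinner x y) \<and>
     (\<forall>h1\<in>H. \<forall>h2\<in>H. \<rho> (h1 \<otimes>\<^bsub>G\<^esub> h2) = \<rho> h1 \<circ> \<rho> h2)"

definition irreducible_rep ::
  "'g set \<Rightarrow> ('g \<Rightarrow> ('n::finite \<Rightarrow> complex) \<Rightarrow> ('n \<Rightarrow> complex)) \<Rightarrow> bool" where
  "irreducible_rep H \<rho> \<longleftrightarrow>
     (\<forall>W. module.subspace cscale W \<and> (\<forall>h\<in>H. \<forall>y\<in>W. \<rho> h y \<in> W)
          \<longrightarrow> W = {0} \<or> W = UNIV)"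

definition left_transversal :: "('g, 'b) monoid_scheme \<Rightarrow> 'g set \<Rightarrow> 'g set \<Rightarrow> bool" where
  "left_transversal G H T \<longleftrightarrow>
     T \<subseteq> carrier G \<and> (\<forall>g\<in>carrier G. \<exists>!t. t \<in> T \<and> inv\<^bsub>G\<^esub> t \<otimes>\<^bsub>G\<^esub> g \<in> H)"

text \<open>The induced space Y^up = (+)_{t in T} t (x) Y, modelled as functions T -> Y
  (extended by 0 outside T); f corresponds to sum_t t (x) f t.\<close>
definition ind_space :: "'g set \<Rightarrow> ('g \<Rightarrow> 'n \<Rightarrow> complex) set" where
  "ind_space T = {f. \<forall>t. t \<notin> T \<longrightarrow> f t = 0}"

definition ind_scale :: "complex \<Rightarrow> ('g \<Rightarrow> 'n \<Rightarrow> complex) \<Rightarrow> ('g \<Rightarrow> 'n \<Rightarrow> complex)" where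
  "ind_scale c f = (\<lambda>t. cscale c (f t))"

definition ind_inner :: "'g set \<Rightarrow> ('g \<Rightarrow> 'n::finite \<Rightarrow> complex) \<Rightarrow> ('g \<Rightarrow> 'n \<Rightarrow> complex) \<Rightarrow> complex" where
  "ind_inner T f f' = (\<Sum>t\<in>T. cinner (f t) (f' t))"

text \<open>Action of g on Y^up: g (t (x) y) = s (x) rho(h) y where g t = s h, s in T, h in H.\<close>
definition ind_action ::
  "('g, 'b) monoid_scheme \<Rightarrow> 'g set \<Rightarrow> ('g \<Rightarrow> ('n \<Rightarrow> complex) \<Rightarrow> ('n \<Rightarrow> complex)) \<Rightarrow> 'g set
   \<Rightarrow> 'g \<Rightarrow> ('g \<Rightarrow> 'n \<Rightarrow> complex) \<Rightarrow> ('g \<Rightarrow> 'n \<Rightarrow> complex)" where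
  "ind_action G H \<rho> T g f =
     (\<lambda>s. if s \<in> T then
            (\<Sum>t\<in>T. if inv\<^bsub>G\<^esub> s \<otimes>\<^bsub>G\<^esub> g \<otimes>\<^bsub>G\<^esub> t \<in> H
                     then \<rho> (inv\<^bsub>G\<^esub> s \<otimes>\<^bsub>G\<^esub> g \<otimes>\<^bsub>G\<^esub> t) (f t) else 0)
          else 0)"

text \<open>Orthogonal projection onto e (x) Y: keep only the summand of the representative of the
  coset H (the unique element of T lying in H), zero out the others.\<close>
definition ind_proj :: "'g set \<Rightarrow> ('g \<Rightarrow> 'n \<Rightarrow> complex) \<Rightarrow> ('g \<Rightarrow> 'n \<Rightarrow> complex)" where
  "ind_proj H f = (\<lambda>t. if t \<in> H then f t else 0)"

lemma vector_space_cscale: "vector_space cscale"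
  by unfold_locales (auto simp: cscale_def fun_eq_iff algebra_simps)

lemma vector_space_ind_scale: "vector_space ind_scale"
  by unfold_locales (auto simp: ind_scale_def cscale_def fun_eq_iff algebra_simps)

end

theory Submission
  imports Defs "HOL-Analysis.Analysis"
begin

text \<open>Let \<open>P\<close> be the orthogonal projection of \<open>Y\<^sup>\<up>\<close> onto \<open>V\<close>, and let \<open>M\<close> be its compression
  to the block \<open>e \<otimes> Y\<close>: for an orthonormal basis \<open>S\<close> of \<open>V\<close>, \<open>M y = \<Sum>\<^sub>u \<langle>u\<^sub>e, y\<rangle> u\<^sub>e\<close>.
  As \<open>V\<close> is \<open>G\<close>-invariant, the form \<open>\<langle>y, M y\<rangle> = \<parallel>P(e \<otimes> y)\<parallel>\<^sup>2\<close> is \<open>\<rho>(H)\<close>-invariant; a maximiser of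
  this form on the unit sphere is an eigenvector of \<open>M\<close>, its eigenspace is \<open>\<rho>(H)\<close>-invariant, and
  by irreducibility \<open>M = \<lambda> \<cdot> id\<close> (Schur's lemma without characteristic polynomials).
  The block \<open>t \<otimes> Y\<close> receives the share \<open>\<Sum>\<^sub>u \<parallel>u\<^sub>t\<parallel>\<^sup>2\<close> of \<open>tr P = dim V\<close>; since \<open>G\<close> permutes the
  blocks transitively and preserves \<open>V\<close>, all shares agree, so \<open>\<lambda> dim Y = dim V / [G:H]\<close>.
  Finally \<open>\<psi> = P(e \<otimes> y) / \<parallel>P(e \<otimes> y)\<parallel>\<close> for a unit vector \<open>y\<close> works: \<open>\<parallel>P(e \<otimes> y)\<parallel>\<^sup>2 = \<lambda>\<close> and
  \<open>E P(e \<otimes> y) = e \<otimes> M y = \<lambda> (e \<otimes> y)\<close>, hence \<open>\<langle>\<psi>|E\<psi>\<rangle> = \<lambda>\<^sup>2 / \<lambda> = \<lambda>\<close>.\<close>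

lemma sum_apply: "(\<Sum>x\<in>A. F x) t = (\<Sum>x\<in>A. F x t)"
  by (induction A rule: infinite_finite_induct) auto

lemma cmod_add_real_mult_squared:
  "(cmod (\<alpha> + complex_of_real t * \<beta>))\<^sup>2 = (cmod \<alpha>)\<^sup>2 + 2 * t * Re (cnj \<alpha> * \<beta>) + t\<^sup>2 * (cmod \<beta>)\<^sup>2"
  by (simp only: cmod_power2) (simp add: power2_eq_square algebra_simps)

interpretation CS: vector_space cscale by (rule vector_space_cscale)
interpretation IS: vector_space ind_scale by (rule vector_space_ind_scale)

definition cnorm2 :: "('n::finite \<Rightarrow> complex) \<Rightarrow> real" where
  "cnorm2 y = (\<Sum>i\<in>UNIV. (cmod (y i))\<^sup>2)"

lemma cinner_add_left: "cinner (x + y) z = cinner x z + cinner y z"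
  by (simp add: cinner_def sum.distrib algebra_simps)

lemma cinner_add_right: "cinner x (y + z) = cinner x y + cinner x z"
  by (simp add: cinner_def sum.distrib algebra_simps)

lemma cinner_diff_left: "cinner (x - y) z = cinner x z - cinner y z"
  by (simp add: cinner_def sum_subtractf algebra_simps)

lemma cinner_diff_right: "cinner x (y - z) = cinner x y - cinner x z"
  by (simp add: cinner_def sum_subtractf algebra_simps)

lemma cinner_scale_left: "cinner (cscale c x) y = cnj c * cinner x y"
  by (simp add: cinner_def cscale_def sum_distrib_left algebra_simps)

lemma cinner_scale_right: "cinner x (cscale c y) = c * cinner x y"
  by (simp add: cinner_def cscale_def sum_distrib_left algebra_simps)

lemma cinner_zero_left [simp]: "cinner 0 x = 0"
  by (simp add: cinner_def)

lemma cinner_zero_right [simp]: "cinner x 0 = 0"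
  by (simp add: cinner_def)

lemma cinner_sum_left: "cinner (\<Sum>u\<in>A. F u) x = (\<Sum>u\<in>A. cinner (F u) x)"
proof (induction A rule: infinite_finite_induct)
  case (insert a A)
  then show ?case by (simp only: sum.insert[OF insert(1,2)] cinner_add_left)
qed (simp_all add: cinner_def)

lemma cinner_sum_right: "cinner x (\<Sum>u\<in>A. F u) = (\<Sum>u\<in>A. cinner x (F u))"
proof (induction A rule: infinite_finite_induct)
  case (insert a A)
  then show ?case by (simp only: sum.insert[OF insert(1,2)] cinner_add_right)
qed (simp_all add: cinner_def)

lemma cnj_cinner: "cnj (cinner x y) = cinner y x"
  by (simp add: cinner_def mult.commute)

lemma cinner_self: "cinner y y = complex_of_real (cnorm2 y)"
  unfolding cinner_def cnorm2_def of_real_sum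
  by (intro sum.cong refl) (simp only: complex_norm_square mult.commute)

lemma cnorm2_nonneg: "0 \<le> cnorm2 y"
  unfolding cnorm2_def by (intro sum_nonneg) auto

lemma cnorm2_eq_0_iff: "cnorm2 y = 0 \<longleftrightarrow> y = 0"
  unfolding cnorm2_def by (subst sum_nonneg_eq_0_iff) (auto simp: fun_eq_iff)

lemma cnorm2_pos: "y \<noteq> 0 \<Longrightarrow> 0 < cnorm2 y"
  using cnorm2_nonneg cnorm2_eq_0_iff by (metis less_eq_real_def)

lemma cnorm2_scale: "cnorm2 (cscale c y) = (cmod c)\<^sup>2 * cnorm2 y"
  unfolding cnorm2_def cscale_def by (simp add: norm_mult power_mult_distrib sum_distrib_left)

lemma cnorm2_add_real_scale:
  "cnorm2 (y + cscale (complex_of_real t) z) = cnorm2 y + 2 * t * Re (cinner y z) + t\<^sup>2 * cnorm2 z"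
  unfolding cnorm2_def cinner_def
  by (simp add: cscale_def cmod_add_real_mult_squared sum.distrib sum_distrib_left algebra_simps)

definition unit_vec :: "'n \<Rightarrow> 'n \<Rightarrow> complex" where
  "unit_vec i = (\<lambda>j. if j = i then 1 else 0)"

lemma cinner_unit_vec_right: "cinner y (unit_vec i) = cnj (y i)"
proof -
  have "cinner y (unit_vec i) = (\<Sum>j\<in>UNIV. if j = i then cnj (y i) else 0)"
    unfolding cinner_def unit_vec_def by (intro sum.cong refl) auto
  then show ?thesis by simp
qed

lemma cnorm2_unit_vec [simp]: "cnorm2 (unit_vec i :: 'n::finite \<Rightarrow> complex) = 1"
  using cinner_unit_vec_right[of "unit_vec i" i] by (simp add: cinner_self unit_vec_def)

definition ind_norm2 :: "'g set \<Rightarrow> ('g \<Rightarrow> 'n::finite \<Rightarrow> complex) \<Rightarrow> real" where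
  "ind_norm2 T f = (\<Sum>t\<in>T. cnorm2 (f t))"

lemma ind_inner_add_left: "ind_inner T (x + y) z = ind_inner T x z + ind_inner T y z"
  by (simp add: ind_inner_def cinner_add_left sum.distrib)

lemma ind_inner_diff_left: "ind_inner T (x - y) z = ind_inner T x z - ind_inner T y z"
  by (simp add: ind_inner_def cinner_diff_left sum_subtractf)

lemma ind_inner_diff_right: "ind_inner T x (y - z) = ind_inner T x y - ind_inner T x z"
  by (simp add: ind_inner_def cinner_diff_right sum_subtractf)

lemma ind_inner_scale_left: "ind_inner T (ind_scale c x) y = cnj c * ind_inner T x y"
  by (simp add: ind_inner_def ind_scale_def cinner_scale_left sum_distrib_left)

lemma ind_inner_scale_right: "ind_inner T x (ind_scale c y) = c * ind_inner T x y"
  by (simp add: ind_inner_def ind_scale_def cinner_scale_right sum_distrib_left)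

lemma ind_inner_sum_left: "ind_inner T (\<Sum>u\<in>A. F u) x = (\<Sum>u\<in>A. ind_inner T (F u) x)"
  by (simp add: ind_inner_def sum_apply cinner_sum_left) (rule sum.swap)

lemma ind_inner_sum_right: "ind_inner T x (\<Sum>u\<in>A. F u) = (\<Sum>u\<in>A. ind_inner T x (F u))"
  by (simp add: ind_inner_def sum_apply cinner_sum_right) (rule sum.swap)

lemma ind_inner_zero_left [simp]: "ind_inner T 0 x = 0"
  by (simp add: ind_inner_def)

lemma cnj_ind_inner: "cnj (ind_inner T x y) = ind_inner T y x"
  by (simp add: ind_inner_def cnj_cinner)

lemma ind_inner_self: "ind_inner T f f = complex_of_real (ind_norm2 T f)"
  by (simp add: ind_inner_def ind_norm2_def cinner_self)

lemma ind_norm2_nonneg: "0 \<le> ind_norm2 T f"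
  unfolding ind_norm2_def by (intro sum_nonneg cnorm2_nonneg)

lemma ind_norm2_eq_0_iff:
  assumes "finite T" "f \<in> ind_space T"
  shows "ind_norm2 T f = 0 \<longleftrightarrow> f = 0"
  using assms unfolding ind_norm2_def ind_space_def
  by (subst sum_nonneg_eq_0_iff) (auto simp: cnorm2_nonneg cnorm2_eq_0_iff fun_eq_iff)

lemma subspace_ind_space: "IS.subspace (ind_space T)"
  by (auto simp: IS.subspace_def ind_space_def ind_scale_def cscale_def fun_eq_iff)

lemma subspace_orthogonal_to: "IS.subspace {v. ind_inner T v y = 0}"
  by (auto simp: IS.subspace_def ind_inner_add_left ind_inner_scale_left)

subsection \<open>Orthonormal sets and orthogonal projections\<close>

definition orthonormal :: "'g set \<Rightarrow> ('g \<Rightarrow> 'n::finite \<Rightarrow> complex) set \<Rightarrow> bool" where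
  "orthonormal T S \<longleftrightarrow> (\<forall>u\<in>S. \<forall>v\<in>S. ind_inner T u v = (if u = v then 1 else 0))"

definition orth_proj ::
  "'g set \<Rightarrow> ('g \<Rightarrow> 'n::finite \<Rightarrow> complex) set \<Rightarrow> ('g \<Rightarrow> 'n \<Rightarrow> complex) \<Rightarrow> ('g \<Rightarrow> 'n \<Rightarrow> complex)" where
  "orth_proj T S x = (\<Sum>u\<in>S. ind_scale (ind_inner T u x) u)"

lemma orth_proj_in_span: "orth_proj T S x \<in> IS.span S"
  unfolding orth_proj_def by (intro IS.span_sum IS.span_scale IS.span_base)

lemma ind_inner_orth_proj_right:
  "ind_inner T w (orth_proj T S x) = (\<Sum>u\<in>S. ind_inner T u x * ind_inner T w u)"
  unfolding orth_proj_def by (simp add: ind_inner_sum_right ind_inner_scale_right)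

lemma ind_inner_orth_proj_left:
  "ind_inner T (orth_proj T S x) x = complex_of_real (\<Sum>u\<in>S. (cmod (ind_inner T u x))\<^sup>2)"
  unfolding orth_proj_def ind_inner_sum_left ind_inner_scale_left of_real_sum
  by (intro sum.cong refl) (simp only: complex_norm_square mult.commute)

lemma orthogonal_residual:
  assumes "finite S" "orthonormal T S" "v \<in> IS.span S"
  shows "ind_inner T v (x - orth_proj T S x) = 0"
proof -
  have "ind_inner T u (orth_proj T S x) = ind_inner T u x" if "u \<in> S" for u
  proof -
    have "ind_inner T u (orth_proj T S x) = (\<Sum>v\<in>S. if v = u then ind_inner T v x else 0)"
      unfolding ind_inner_orth_proj_right using assms(2) that
      by (intro sum.cong refl) (auto simp: orthonormal_def)
    then show ?thesis using assms(1) that by simp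
  qed
  then have "S \<subseteq> {v. ind_inner T v (x - orth_proj T S x) = 0}"
    by (auto simp: ind_inner_diff_right)
  then have "IS.span S \<subseteq> {v. ind_inner T v (x - orth_proj T S x) = 0}"
    by (intro IS.span_minimal subspace_orthogonal_to)
  then show ?thesis using assms(3) by auto
qed

lemma ind_norm2_orth_proj:
  assumes "finite S" "orthonormal T S"
  shows "ind_norm2 T (orth_proj T S x) = (\<Sum>u\<in>S. (cmod (ind_inner T u x))\<^sup>2)"
proof -
  have "ind_inner T (orth_proj T S x) (x - orth_proj T S x) = 0"
    by (rule orthogonal_residual[OF assms orth_proj_in_span])
  then have "ind_inner T (orth_proj T S x) (orth_proj T S x) = ind_inner T (orth_proj T S x) x"
    by (simp add: ind_inner_diff_right)
  then have "complex_of_real (ind_norm2 T (orth_proj T S x))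
      = complex_of_real (\<Sum>u\<in>S. (cmod (ind_inner T u x))\<^sup>2)"
    by (simp only: ind_inner_self ind_inner_orth_proj_left)
  then show ?thesis by (simp only: of_real_eq_iff)
qed

lemma bessel_inequality:
  assumes "finite S" "orthonormal T S"
  shows "(\<Sum>u\<in>S. (cmod (ind_inner T u x))\<^sup>2) \<le> ind_norm2 T x"
proof -
  let ?p = "orth_proj T S x" and ?c = "\<Sum>u\<in>S. (cmod (ind_inner T u x))\<^sup>2"
  have "ind_inner T ?p (x - ?p) = 0" by (rule orthogonal_residual[OF assms orth_proj_in_span])
  then have "ind_inner T (x - ?p) (x - ?p) = ind_inner T x x - ind_inner T x ?p"
    by (simp add: ind_inner_diff_left ind_inner_diff_right)
  also have "ind_inner T x ?p = cnj (ind_inner T ?p x)" by (simp add: cnj_ind_inner)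
  finally have "ind_norm2 T (x - ?p) = ind_norm2 T x - ?c"
    unfolding ind_inner_self ind_inner_orth_proj_left complex_cnj_complex_of_real
    by (simp only: of_real_diff[symmetric] of_real_eq_iff)
  then show ?thesis using ind_norm2_nonneg[of T "x - ?p"] by linarith
qed

text \<open>The Fourier coefficients of \<open>x\<close> against \<open>S'\<close> only see the part of \<open>x\<close> in \<open>span S\<close>.\<close>
lemma bessel_inequality_subspan:
  assumes "finite S" "orthonormal T S" "finite S'" "orthonormal T S'" "S' \<subseteq> IS.span S"
  shows "(\<Sum>w\<in>S'. (cmod (ind_inner T w x))\<^sup>2) \<le> (\<Sum>u\<in>S. (cmod (ind_inner T u x))\<^sup>2)"
proof -
  have "(\<Sum>w\<in>S'. (cmod (ind_inner T w x))\<^sup>2) = (\<Sum>w\<in>S'. (cmod (ind_inner T w (orth_proj T S x)))\<^sup>2)"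
  proof (intro sum.cong refl)
    fix w assume "w \<in> S'"
    then have "ind_inner T w (x - orth_proj T S x) = 0"
      using orthogonal_residual[OF assms(1,2)] assms(5) by blast
    then show "(cmod (ind_inner T w x))\<^sup>2 = (cmod (ind_inner T w (orth_proj T S x)))\<^sup>2"
      by (simp add: ind_inner_diff_right)
  qed
  also have "\<dots> \<le> ind_norm2 T (orth_proj T S x)" by (rule bessel_inequality[OF assms(3,4)])
  also have "\<dots> = (\<Sum>u\<in>S. (cmod (ind_inner T u x))\<^sup>2)" by (rule ind_norm2_orth_proj[OF assms(1,2)])
  finally show ?thesis .
qed

lemma orthonormal_independent:
  assumes "orthonormal T S"
  shows "IS.independent S"
proof
  assume "IS.dependent S"
  then obtain a where a: "a \<in> S" "a \<in> IS.span (S - {a})" unfolding IS.dependent_def by blast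
  have "IS.span (S - {a}) \<subseteq> {v. ind_inner T v a = 0}"
    using assms a(1) by (intro IS.span_minimal subspace_orthogonal_to) (auto simp: orthonormal_def)
  then have "ind_inner T a a = 0" using a(2) by auto
  moreover have "ind_inner T a a = 1" using assms a(1) by (auto simp: orthonormal_def)
  ultimately show False by simp
qed

lemma orthonormal_image_unitary:
  assumes "orthonormal T S" "\<And>u v. ind_inner T (U u) (U v) = ind_inner T u v"
  shows "orthonormal T (U ` S)" and "inj_on U S"
proof -
  show inj: "inj_on U S"
  proof
    fix u v assume uv: "u \<in> S" "v \<in> S" "U u = U v"
    then have "ind_inner T u v = ind_inner T u u" by (metis assms(2))
    then show "u = v" using assms(1) uv(1,2) unfolding orthonormal_def by (auto split: if_splits)
  qed
  show "orthonormal T (U ` S)"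
    using assms inj_on_eq_iff[OF inj] unfolding orthonormal_def by auto
qed

lemma ind_inner_scale_inv_sqrt:
  assumes "0 < r"
  shows "ind_inner T (ind_scale (complex_of_real (1 / sqrt r)) x) (ind_scale (complex_of_real (1 / sqrt r)) y)
           = ind_inner T x y / complex_of_real r"
proof -
  have "cnj (complex_of_real (1 / sqrt r)) * complex_of_real (1 / sqrt r) = complex_of_real (1 / r)"
    using assms by (simp flip: of_real_mult)
  then show ?thesis
    by (simp add: ind_inner_scale_left ind_inner_scale_right field_simps)
qed

lemma span_insert_scale_residual:
  assumes "c \<noteq> 0"
  shows "IS.span (insert (ind_scale c (a - orth_proj T S a)) S) = IS.span (insert a S)"
proof -
  let ?u = "ind_scale c (a - orth_proj T S a)"
  have proj_span: "orth_proj T S a \<in> IS.span (insert b S)" for b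
    using IS.span_mono[of S "insert b S"] orth_proj_in_span by blast
  have "a = ind_scale (inverse c) ?u + orth_proj T S a"
    using assms by (simp add: IS.scale_scale)
  then have "a \<in> IS.span (insert ?u S)"
    by (metis IS.span_add IS.span_scale IS.span_base insertI1 proj_span)
  moreover have "?u \<in> IS.span (insert a S)"
    by (intro IS.span_scale IS.span_diff IS.span_base insertI1 proj_span)
  ultimately show ?thesis unfolding IS.span_eq by (auto intro: IS.span_base)
qed

lemma gram_schmidt_step:
  assumes "finite T" "finite S" "S \<subseteq> ind_space T" "orthonormal T S" "a \<in> ind_space T"
  shows "\<exists>S'. finite S' \<and> S' \<subseteq> ind_space T \<and> orthonormal T S' \<and> IS.span S' = IS.span (insert a S)"
proof (cases "a \<in> IS.span S")
  case True
  then show ?thesis using assms(2-4) by (metis IS.span_redundant)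
next
  case False
  define w where "w = a - orth_proj T S a"
  define r where "r = ind_norm2 T w"
  define u where "u = ind_scale (complex_of_real (1 / sqrt r)) w"
  have span_S: "IS.span S \<subseteq> ind_space T"
    using assms(3) by (rule IS.span_minimal[OF _ subspace_ind_space])
  have w_ind: "w \<in> ind_space T"
    unfolding w_def using assms(5) orth_proj_in_span span_S subspace_ind_space IS.subspace_diff by blast
  have "w \<noteq> 0" using False orth_proj_in_span unfolding w_def by (metis eq_iff_diff_eq_0)
  then have r: "0 < r"
    using ind_norm2_eq_0_iff[OF assms(1) w_ind] ind_norm2_nonneg unfolding r_def by (metis less_eq_real_def)
  have u_ind: "u \<in> ind_space T" unfolding u_def using w_ind subspace_ind_space IS.subspace_scale by blast
  have "ind_inner T u u = ind_inner T w w / complex_of_real r"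
    unfolding u_def by (rule ind_inner_scale_inv_sqrt[OF r])
  then have uu: "ind_inner T u u = 1" using r by (simp add: ind_inner_self r_def)
  have su: "ind_inner T s u = 0" if "s \<in> S" for s
    using orthogonal_residual[OF assms(2,4) IS.span_base[OF that]]
    unfolding u_def w_def ind_inner_scale_right by simp
  have us: "ind_inner T u s = 0" if "s \<in> S" for s
    using su[OF that] cnj_ind_inner[of T u s] by (metis complex_cnj_zero_iff)
  have "orthonormal T (insert u S)"
    using assms(4) uu su us unfolding orthonormal_def by auto
  moreover have "IS.span (insert u S) = IS.span (insert a S)"
    unfolding u_def w_def using r by (intro span_insert_scale_residual) simp
  ultimately show ?thesis
    using assms(2,3) u_ind by (intro exI[of _ "insert u S"]) simp
qed

lemma gram_schmidt:
  assumes "finite T" "finite A" "A \<subseteq> ind_space T"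
  shows "\<exists>S. finite S \<and> S \<subseteq> ind_space T \<and> orthonormal T S \<and> IS.span S = IS.span A"
  using assms(2,3)
proof (induction A rule: finite_induct)
  case empty
  show ?case by (intro exI[of _ "{}"]) (auto simp: orthonormal_def)
next
  case (insert a A)
  then obtain S where S: "finite S" "S \<subseteq> ind_space T" "orthonormal T S" "IS.span S = IS.span A"
    by auto
  have "IS.span (insert a S) = IS.span (insert a A)" using S(4) by (simp add: IS.span_insert)
  then show ?case using gram_schmidt_step[OF assms(1) S(1-3), of a] insert.prems by auto
qed

definition ind_tensor :: "'g \<Rightarrow> ('n \<Rightarrow> complex) \<Rightarrow> ('g \<Rightarrow> 'n \<Rightarrow> complex)" where
  "ind_tensor t y = (\<lambda>s. if s = t then y else 0)"

lemma ind_tensor_in_ind_space: "t \<in> T \<Longrightarrow> ind_tensor t y \<in> ind_space T"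
  by (auto simp: ind_tensor_def ind_space_def)

lemma ind_inner_ind_tensor_right:
  assumes "finite T" "t \<in> T"
  shows "ind_inner T f (ind_tensor t y) = cinner (f t) y"
proof -
  have "ind_inner T f (ind_tensor t y) = (\<Sum>s\<in>T. if s = t then cinner (f t) y else 0)"
    unfolding ind_inner_def ind_tensor_def by (intro sum.cong refl) auto
  then show ?thesis using assms by simp
qed

lemma ind_tensor_unit_vec_eq_iff:
  "ind_tensor t (unit_vec i) = ind_tensor t' (unit_vec i') \<longleftrightarrow> t = t' \<and> i = i'"
  by (auto simp: ind_tensor_def unit_vec_def fun_eq_iff split: if_splits)

definition ind_std_basis :: "'g set \<Rightarrow> ('g \<Rightarrow> 'n::finite \<Rightarrow> complex) set" where
  "ind_std_basis T = (\<lambda>(t, i). ind_tensor t (unit_vec i)) ` (T \<times> UNIV)"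

lemma finite_ind_std_basis: "finite T \<Longrightarrow> finite (ind_std_basis T)"
  by (simp add: ind_std_basis_def)

lemma ind_space_subset_span_std_basis:
  fixes T :: "'g set"
  assumes "finite T"
  shows "ind_space T \<subseteq> IS.span (ind_std_basis T :: ('g \<Rightarrow> 'n::finite \<Rightarrow> complex) set)"
proof
  fix f :: "'g \<Rightarrow> 'n \<Rightarrow> complex"
  assume f: "f \<in> ind_space T"
  have "f = (\<Sum>p\<in>T \<times> UNIV. ind_scale (f (fst p) (snd p)) (ind_tensor (fst p) (unit_vec (snd p))))"
  proof (intro ext)
    fix s j
    have "(\<Sum>p\<in>T \<times> UNIV. ind_scale (f (fst p) (snd p)) (ind_tensor (fst p) (unit_vec (snd p)))) s j
        = (\<Sum>p\<in>T \<times> UNIV. if p = (s, j) then f s j else 0)"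
      unfolding sum_apply
      by (intro sum.cong refl) (auto simp: ind_scale_def cscale_def ind_tensor_def unit_vec_def)
    also have "\<dots> = f s j" using assms f by (auto simp: ind_space_def)
    finally show "f s j = (\<Sum>p\<in>T \<times> UNIV. ind_scale (f (fst p) (snd p)) (ind_tensor (fst p) (unit_vec (snd p)))) s j"
      by simp
  qed
  also have "\<dots> \<in> IS.span (ind_std_basis T)"
    by (intro IS.span_sum IS.span_scale IS.span_base) (auto simp: ind_std_basis_def)
  finally show "f \<in> IS.span (ind_std_basis T)" .
qed

lemma dim_ind_space:
  assumes "finite T"
  shows "IS.dim (ind_space T :: ('g \<Rightarrow> 'n::finite \<Rightarrow> complex) set) = card T * CARD('n)"
proof -
  have "orthonormal T (ind_std_basis T :: ('g \<Rightarrow> 'n \<Rightarrow> complex) set)"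
    using assms unfolding orthonormal_def ind_std_basis_def
    by (auto simp: ind_inner_ind_tensor_right cinner_unit_vec_right ind_tensor_unit_vec_eq_iff)
       (auto simp: ind_tensor_def unit_vec_def)
  moreover have "card (ind_std_basis T :: ('g \<Rightarrow> 'n \<Rightarrow> complex) set) = card T * CARD('n)"
    unfolding ind_std_basis_def
    by (subst card_image) (auto simp: inj_on_def ind_tensor_unit_vec_eq_iff card_cartesian_product)
  moreover have "ind_std_basis T \<subseteq> ind_space T"
    unfolding ind_std_basis_def using ind_tensor_in_ind_space by auto
  ultimately show ?thesis
    using IS.basis_card_eq_dim ind_space_subset_span_std_basis[OF assms] orthonormal_independent
    by metis
qed

lemma orthonormal_basis_exists:
  assumes "finite T" "IS.subspace V" "V \<subseteq> ind_space T"
  obtains S where "finite S" "orthonormal T S" "IS.span S = V"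
proof -
  obtain B where B: "B \<subseteq> V" "IS.independent B" "V \<subseteq> IS.span B"
    by (rule IS.basis_exists)
  have "B \<subseteq> IS.span (ind_std_basis T)"
    using B(1) assms(3) ind_space_subset_span_std_basis[OF assms(1)] by blast
  then have "finite B"
    using IS.independent_span_bound[OF finite_ind_std_basis[OF assms(1)] B(2)] by simp
  then obtain S where "finite S" "orthonormal T S" "IS.span S = IS.span B"
    using gram_schmidt[OF assms(1)] B(1) assms(3) by (metis subset_trans)
  moreover have "IS.span B = V" by (rule IS.span_subspace[OF B(1,3) assms(2)])
  ultimately show ?thesis using that by simp
qed

subsection \<open>Schur's lemma for Gram operators\<close>

definition gram_op :: "'k set \<Rightarrow> ('k \<Rightarrow> 'n::finite \<Rightarrow> complex) \<Rightarrow> ('n \<Rightarrow> complex) \<Rightarrow> ('n \<Rightarrow> complex)" where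
  "gram_op S a y = (\<Sum>j\<in>S. cscale (cinner (a j) y) (a j))"

definition gram_form :: "'k set \<Rightarrow> ('k \<Rightarrow> 'n::finite \<Rightarrow> complex) \<Rightarrow> ('n \<Rightarrow> complex) \<Rightarrow> real" where
  "gram_form S a y = (\<Sum>j\<in>S. (cmod (cinner (a j) y))\<^sup>2)"

lemma cinner_gram_op_left: "cinner (gram_op S a y) z = (\<Sum>j\<in>S. cnj (cinner (a j) y) * cinner (a j) z)"
  unfolding gram_op_def cinner_sum_left cinner_scale_left ..

lemma cinner_gram_op_right: "cinner y (gram_op S a y) = complex_of_real (gram_form S a y)"
  unfolding gram_op_def cinner_sum_right cinner_scale_right gram_form_def of_real_sum
proof (intro sum.cong refl)
  fix j
  have "cinner y (a j) = cnj (cinner (a j) y)" by (simp add: cnj_cinner)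
  then show "cinner (a j) y * cinner y (a j) = complex_of_real ((cmod (cinner (a j) y))\<^sup>2)"
    by (simp only: complex_norm_square)
qed

lemma gram_op_add: "gram_op S a (x + y) = gram_op S a x + gram_op S a y"
  unfolding gram_op_def cinner_add_right
  by (simp add: cscale_def sum.distrib algebra_simps fun_eq_iff sum_apply)

lemma gram_op_scale: "gram_op S a (cscale c x) = cscale c (gram_op S a x)"
  unfolding gram_op_def cinner_scale_right
  by (simp add: cscale_def fun_eq_iff sum_apply sum_distrib_left algebra_simps)

lemma gram_form_scale: "gram_form S a (cscale c x) = (cmod c)\<^sup>2 * gram_form S a x"
  unfolding gram_form_def cinner_scale_right by (simp add: norm_mult power_mult_distrib sum_distrib_left)

lemma gram_form_add_real_scale:
  "gram_form S a (y + cscale (complex_of_real t) z)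
     = gram_form S a y + 2 * t * (\<Sum>j\<in>S. Re (cnj (cinner (a j) y) * cinner (a j) z)) + t\<^sup>2 * gram_form S a z"
  unfolding gram_form_def cinner_add_right cinner_scale_right
  by (simp add: cmod_add_real_mult_squared sum.distrib sum_distrib_left algebra_simps)

lemma linear_le_quadratic_imp_zero:
  fixes r C :: real
  assumes "\<And>t. 2 * t * r \<le> t\<^sup>2 * C" "0 \<le> r"
  shows "r = 0"
proof (rule ccontr)
  assume "r \<noteq> 0"
  with assms(2) have "0 < r" by simp
  define D where "D = \<bar>C\<bar> + 1"
  have "0 < D" unfolding D_def by simp
  have "2 * (r / D) * r \<le> (r / D)\<^sup>2 * C" by (rule assms(1))
  then have "r * r * (2 * D) \<le> r * r * C"
    using \<open>0 < D\<close> by (simp add: field_simps power2_eq_square)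
  then have "2 * D \<le> C" using \<open>0 < r\<close> by simp
  moreover have "C < D" unfolding D_def using abs_ge_self[of C] by linarith
  ultimately show False using \<open>0 < D\<close> by linarith
qed

text \<open>A maximiser of the Rayleigh quotient is an eigenvector: perturbing \<open>y\<close> in the direction of the
  residual \<open>z = M y - \<lambda> y\<close> (which is orthogonal to \<open>y\<close>) would otherwise increase the quotient.\<close>
lemma gram_op_eigenvector_if_max:
  assumes bound: "\<And>x. gram_form S a x \<le> \<kappa> * cnorm2 x" and eq: "gram_form S a y = \<kappa> * cnorm2 y"
  shows "gram_op S a y = cscale (complex_of_real \<kappa>) y"
proof -
  define z where "z = gram_op S a y - cscale (complex_of_real \<kappa>) y"
  define r where "r = (\<Sum>j\<in>S. Re (cnj (cinner (a j) y) * cinner (a j) z))"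
  have yz: "cinner y z = 0"
    unfolding z_def cinner_diff_right cinner_scale_right cinner_gram_op_right cinner_self eq by simp
  have "cinner z z = cinner (gram_op S a y) z"
    using yz unfolding z_def[of] cinner_diff_left[of "gram_op S a y"] cinner_scale_left
    by (simp add: z_def[symmetric])
  then have rz: "r = cnorm2 z"
    unfolding r_def cinner_self cinner_gram_op_left by (metis Re_complex_of_real Re_sum)
  have "2 * t * r \<le> t\<^sup>2 * (\<kappa> * cnorm2 z - gram_form S a z)" for t
    using bound[of "y + cscale (complex_of_real t) z"]
    unfolding gram_form_add_real_scale cnorm2_add_real_scale yz r_def[symmetric] eq
    by (simp add: algebra_simps)
  then have "r = 0" using linear_le_quadratic_imp_zero rz cnorm2_nonneg by metis
  then have "z = 0" using rz cnorm2_eq_0_iff by metis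
  then show ?thesis unfolding z_def by simp
qed

lemma gram_form_max_exists:
  obtains \<kappa> and y :: "'n::finite \<Rightarrow> complex"
  where "cnorm2 y = 1" "gram_form S a y = \<kappa>" "\<And>x. gram_form S a x \<le> \<kappa> * cnorm2 x"
proof -
  have norm_vec: "norm v = sqrt (cnorm2 (vec_nth v))" for v :: "complex ^ 'n"
    unfolding norm_vec_def L2_set_def cnorm2_def by simp
  have vec_nth_vec_lambda: "vec_nth (vec_lambda f) = f" for f :: "'n \<Rightarrow> complex"
    by (simp add: fun_eq_iff)
  have "continuous_on (sphere 0 1) (\<lambda>v::complex ^ 'n. gram_form S a (vec_nth v))"
    unfolding gram_form_def cinner_def by (intro continuous_intros)
  moreover have "sphere (0::complex ^ 'n) 1 \<noteq> {}" by simp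
  ultimately obtain v :: "complex ^ 'n" where v: "v \<in> sphere 0 1"
    and v_max: "\<And>w. w \<in> sphere 0 1 \<Longrightarrow> gram_form S a (vec_nth w) \<le> gram_form S a (vec_nth v)"
    using continuous_attains_sup[OF compact_sphere] by blast
  have unit: "cnorm2 (vec_nth v) = 1"
    using v norm_vec[of v] cnorm2_nonneg[of "vec_nth v"] by simp
  have "gram_form S a x \<le> gram_form S a (vec_nth v) * cnorm2 x" for x
  proof (cases "x = 0")
    case True
    then show ?thesis by (simp add: gram_form_def cnorm2_def)
  next
    case False
    then have pos: "0 < cnorm2 x" by (rule cnorm2_pos)
    define c where "c = complex_of_real (1 / sqrt (cnorm2 x))"
    have c: "(cmod c)\<^sup>2 = 1 / cnorm2 x"
      unfolding c_def norm_of_real using pos by (simp add: power_divide)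
    have "cnorm2 (vec_nth (vec_lambda (cscale c x))) = 1"
      using pos by (simp add: vec_nth_vec_lambda cnorm2_scale c)
    then have "gram_form S a (cscale c x) \<le> gram_form S a (vec_nth v)"
      using v_max[of "vec_lambda (cscale c x)"] norm_vec by (simp add: vec_nth_vec_lambda)
    then show ?thesis using pos by (simp add: gram_form_scale c field_simps)
  qed
  then show ?thesis using that unit by (simp add: mult.commute)
qed

text \<open>The maximal level set of the Rayleigh quotient is the top eigenspace of the Gram operator.\<close>
lemma subspace_gram_form_max_level:
  assumes bound: "\<And>x. gram_form S a x \<le> \<kappa> * cnorm2 x"
  shows "CS.subspace {y. gram_form S a y = \<kappa> * cnorm2 y}"
proof -
  have eigen: "gram_form S a y = \<kappa> * cnorm2 y \<longleftrightarrow> gram_op S a y = cscale (complex_of_real \<kappa>) y" for y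
  proof
    assume "gram_op S a y = cscale (complex_of_real \<kappa>) y"
    then have "complex_of_real (gram_form S a y) = complex_of_real (\<kappa> * cnorm2 y)"
      by (simp add: cinner_gram_op_right [symmetric] cinner_scale_right cinner_self)
    then show "gram_form S a y = \<kappa> * cnorm2 y" by (simp only: of_real_eq_iff)
  qed (rule gram_op_eigenvector_if_max[OF bound])
  show ?thesis
  proof (rule CS.subspaceI)
    show "0 \<in> {y. gram_form S a y = \<kappa> * cnorm2 y}" by (simp add: cnorm2_def gram_form_def)
    show "x + y \<in> {y. gram_form S a y = \<kappa> * cnorm2 y}"
      if "x \<in> {y. gram_form S a y = \<kappa> * cnorm2 y}" "y \<in> {y. gram_form S a y = \<kappa> * cnorm2 y}" for x y
      using that unfolding mem_Collect_eq eigen gram_op_add by (simp add: cscale_def fun_eq_iff algebra_simps)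
    show "cscale c x \<in> {y. gram_form S a y = \<kappa> * cnorm2 y}"
      if "x \<in> {y. gram_form S a y = \<kappa> * cnorm2 y}" for c x
      using that unfolding mem_Collect_eq eigen gram_op_scale by (simp add: cscale_def fun_eq_iff algebra_simps)
  qed
qed

lemma gram_op_scalar_if_invariant:
  assumes "irreducible_rep H \<rho>"
    and isometric: "\<And>h y. h \<in> H \<Longrightarrow> cnorm2 (\<rho> h y) = cnorm2 y"
    and invariant: "\<And>h y. h \<in> H \<Longrightarrow> gram_form S a (\<rho> h y) = gram_form S a y"
  obtains \<kappa> where "\<And>y. gram_op S a y = cscale (complex_of_real \<kappa>) y"
    and "\<And>y. gram_form S a y = \<kappa> * cnorm2 y"
proof -
  obtain \<kappa> y0 where y0: "cnorm2 y0 = 1" "gram_form S a y0 = \<kappa>"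
    and bound: "\<And>x. gram_form S a x \<le> \<kappa> * cnorm2 x"
    using gram_form_max_exists[of S a] by blast
  define W where "W = {y. gram_form S a y = \<kappa> * cnorm2 y}"
  have "CS.subspace W" unfolding W_def by (rule subspace_gram_form_max_level[OF bound])
  moreover have "\<forall>h\<in>H. \<forall>y\<in>W. \<rho> h y \<in> W"
    unfolding W_def using invariant isometric by simp
  moreover have "W \<noteq> {0}"
  proof -
    have "y0 \<in> W" using y0 unfolding W_def by simp
    moreover have "y0 \<noteq> 0" using y0(1) cnorm2_eq_0_iff[of y0] by auto
    ultimately show ?thesis by blast
  qed
  ultimately have "W = UNIV" using assms unfolding irreducible_rep_def by blast
  then have form: "gram_form S a y = \<kappa> * cnorm2 y" for y unfolding W_def by blast
  show ?thesis
    by (rule that, rule gram_op_eigenvector_if_max[OF bound form], rule form)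
qed

subsection \<open>Block weights of an orthonormal set\<close>

text \<open>The weight of the block \<open>t \<otimes> Y\<close> in the orthogonal projection onto \<open>span S\<close>, i.e. the trace of
  its compression to that block.\<close>
definition block_weight :: "('g \<Rightarrow> 'n::finite \<Rightarrow> complex) set \<Rightarrow> 'g \<Rightarrow> real" where
  "block_weight S t = (\<Sum>u\<in>S. cnorm2 (u t))"

lemma sum_block_weight:
  assumes "orthonormal T S"
  shows "(\<Sum>t\<in>T. block_weight S t) = real (card S)"
proof -
  have "(\<Sum>t\<in>T. block_weight S t) = (\<Sum>u\<in>S. ind_norm2 T u)"
    unfolding block_weight_def ind_norm2_def by (rule sum.swap)
  also have "\<dots> = (\<Sum>u\<in>S. 1)"
  proof (intro sum.cong refl)
    fix u assume "u \<in> S"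
    then have "ind_inner T u u = 1" using assms by (simp add: orthonormal_def)
    then show "ind_norm2 T u = 1" unfolding ind_inner_self by simp
  qed
  finally show ?thesis by simp
qed

lemma block_weight_eq_sum_coeffs:
  assumes "finite T" "t \<in> T"
  shows "block_weight S t = (\<Sum>i\<in>UNIV. \<Sum>u\<in>S. (cmod (ind_inner T u (ind_tensor t (unit_vec i))))\<^sup>2)"
  unfolding block_weight_def cnorm2_def ind_inner_ind_tensor_right[OF assms] cinner_unit_vec_right
  by (simp add: sum.swap[of _ S])

lemma block_weight_mono:
  assumes "finite S" "orthonormal T S" "finite S'" "orthonormal T S'" "S' \<subseteq> IS.span S"
    and "finite T" "t \<in> T"
  shows "block_weight S' t \<le> block_weight S t"
  unfolding block_weight_eq_sum_coeffs[OF assms(6,7)]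
  by (intro sum_mono bessel_inequality_subspan[OF assms(1-5)])

locale induced_rep = group G for G :: "('g, 'b) monoid_scheme" (structure) +
  fixes H :: "'g set" and \<rho> :: "'g \<Rightarrow> ('n::finite \<Rightarrow> complex) \<Rightarrow> ('n \<Rightarrow> complex)" and T :: "'g set"
  assumes finite_carrier: "finite (carrier G)" and subgroup_H: "subgroup H G"
    and unitary: "unitary_rep G H \<rho>" and transversal: "left_transversal G H T"
begin

lemma H_subset: "H \<subseteq> carrier G"
  by (rule subgroup.subset[OF subgroup_H])

lemma inv_in_H_iff: "x \<in> carrier G \<Longrightarrow> inv x \<in> H \<longleftrightarrow> x \<in> H"
  by (metis inv_inv subgroup.m_inv_closed[OF subgroup_H])

lemma mult_in_H_iff: "x \<in> carrier G \<Longrightarrow> k \<in> H \<Longrightarrow> x \<otimes> k \<in> H \<longleftrightarrow> x \<in> H"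
proof
  assume x: "x \<in> carrier G" and k: "k \<in> H" and "x \<otimes> k \<in> H"
  then have "x \<otimes> k \<otimes> inv k \<in> H"
    using subgroup.m_closed[OF subgroup_H] subgroup.m_inv_closed[OF subgroup_H k] by blast
  then show "x \<in> H" using x k H_subset by (auto simp: m_assoc)
qed (rule subgroup.m_closed[OF subgroup_H])

lemma T_subset: "T \<subseteq> carrier G"
  using transversal unfolding left_transversal_def by blast

lemma finite_T: "finite T"
  by (rule finite_subset[OF T_subset finite_carrier])

lemma transversal_unique: "g \<in> carrier G \<Longrightarrow> \<exists>!t. t \<in> T \<and> inv t \<otimes> g \<in> H"
  using transversal unfolding left_transversal_def by blast

lemma rho_add: "h \<in> H \<Longrightarrow> \<rho> h (x + y) = \<rho> h x + \<rho> h y"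
  using unitary unfolding unitary_rep_def Vector_Spaces.linear_iff by blast

lemma rho_zero: "h \<in> H \<Longrightarrow> \<rho> h 0 = 0"
  using rho_add[of h 0 0] by simp

lemma rho_cinner: "h \<in> H \<Longrightarrow> cinner (\<rho> h x) (\<rho> h y) = cinner x y"
  using unitary unfolding unitary_rep_def by blast

lemma rho_cnorm2: "h \<in> H \<Longrightarrow> cnorm2 (\<rho> h x) = cnorm2 x"
  using rho_cinner[of h x x] by (simp add: cinner_self)

lemma rho_mult: "h \<in> H \<Longrightarrow> k \<in> H \<Longrightarrow> \<rho> (h \<otimes> k) x = \<rho> h (\<rho> k x)"
  using unitary unfolding unitary_rep_def by (metis comp_apply)

text \<open>\<open>\<rho> \<one>\<close> is an idempotent isometry, hence the identity.\<close>
lemma rho_one: "\<rho> \<one> x = x"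
proof -
  have one: "\<one> \<in> H" by (rule subgroup.one_closed[OF subgroup_H])
  have "\<rho> \<one> (\<rho> \<one> x - x) + \<rho> \<one> x = \<rho> \<one> x"
    using rho_add[OF one, of "\<rho> \<one> x - x" x] rho_mult[OF one one, of x] by simp
  then have "\<rho> \<one> (\<rho> \<one> x - x) = 0" by simp
  then have "cnorm2 (\<rho> \<one> x - x) = 0" by (metis rho_cnorm2[OF one] cnorm2_eq_0_iff)
  then show ?thesis by (metis cnorm2_eq_0_iff eq_iff_diff_eq_0)
qed

lemma rho_inv: "k \<in> H \<Longrightarrow> \<rho> (inv k) (\<rho> k y) = y"
  using rho_mult[OF subgroup.m_inv_closed[OF subgroup_H], of k k y] rho_one H_subset by auto

definition base_rep :: 'g where
  "base_rep = (THE t. t \<in> T \<and> t \<in> H)"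

lemma base_rep: "base_rep \<in> T" "base_rep \<in> H" and base_rep_unique: "t \<in> T \<Longrightarrow> t \<in> H \<Longrightarrow> t = base_rep"
proof -
  have "t \<in> T \<and> inv t \<otimes> \<one> \<in> H \<longleftrightarrow> t \<in> T \<and> t \<in> H" for t
    using T_subset inv_in_H_iff by auto
  then have ex1: "\<exists>!t. t \<in> T \<and> t \<in> H"
    using transversal_unique[OF one_closed] by simp
  show "base_rep \<in> T" "base_rep \<in> H"
    using theI'[OF ex1] unfolding base_rep_def by simp_all
  show "t \<in> T \<Longrightarrow> t \<in> H \<Longrightarrow> t = base_rep"
    unfolding base_rep_def by (rule the1_equality[OF ex1, symmetric]) simp
qed

lemma ind_inner_ind_proj_right: "ind_inner T f (ind_proj H g) = cinner (f base_rep) (g base_rep)"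
proof -
  have "ind_inner T f (ind_proj H g) = (\<Sum>t\<in>T. if t = base_rep then cinner (f base_rep) (g base_rep) else 0)"
    unfolding ind_inner_def ind_proj_def
    by (intro sum.cong refl) (auto simp: base_rep dest: base_rep_unique)
  then show ?thesis using finite_T base_rep(1) by simp
qed

text \<open>\<open>g\<close> maps the block \<open>source_block g s \<otimes> Y\<close> onto the block \<open>s \<otimes> Y\<close>.\<close>
definition source_block :: "'g \<Rightarrow> 'g \<Rightarrow> 'g" where
  "source_block g s = (THE t. t \<in> T \<and> inv s \<otimes> g \<otimes> t \<in> H)"

lemma source_block_ex1:
  assumes "g \<in> carrier G" "s \<in> T"
  shows "\<exists>!t. t \<in> T \<and> inv s \<otimes> g \<otimes> t \<in> H"
proof -
  have s: "s \<in> carrier G" using assms(2) T_subset by blast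
  have "inv s \<otimes> g \<otimes> t \<in> H \<longleftrightarrow> inv t \<otimes> (inv g \<otimes> s) \<in> H" if "t \<in> T" for t
  proof -
    have t: "t \<in> carrier G" using that T_subset by blast
    have "inv (inv s \<otimes> g \<otimes> t) = inv t \<otimes> (inv g \<otimes> s)"
      using s t assms(1) by (simp add: inv_mult_group m_assoc)
    then show ?thesis using inv_in_H_iff[of "inv s \<otimes> g \<otimes> t"] s t assms(1) by simp
  qed
  then show ?thesis using transversal_unique[of "inv g \<otimes> s"] s assms(1) by auto
qed

lemma source_block:
  assumes "g \<in> carrier G" "s \<in> T"
  shows "source_block g s \<in> T" "inv s \<otimes> g \<otimes> source_block g s \<in> H"
    and source_block_unique: "t \<in> T \<Longrightarrow> inv s \<otimes> g \<otimes> t \<in> H \<Longrightarrow> t = source_block g s"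
proof -
  show "source_block g s \<in> T" "inv s \<otimes> g \<otimes> source_block g s \<in> H"
    using theI'[OF source_block_ex1[OF assms]] unfolding source_block_def by simp_all
  show "t \<in> T \<Longrightarrow> inv s \<otimes> g \<otimes> t \<in> H \<Longrightarrow> t = source_block g s"
    unfolding source_block_def by (rule the1_equality[OF source_block_ex1[OF assms], symmetric]) simp
qed

lemma inj_on_source_block:
  assumes "g \<in> carrier G"
  shows "inj_on (source_block g) T"
proof
  fix s1 s2 assume s: "s1 \<in> T" "s2 \<in> T" "source_block g s1 = source_block g s2"
  define t where "t = source_block g s1"
  have G: "s1 \<in> carrier G" "s2 \<in> carrier G" "t \<in> carrier G"
    using s T_subset source_block(1)[OF assms s(1)] unfolding t_def by auto
  \<comment> \<open>both \<open>s1\<close> and \<open>s2\<close> represent the coset of \<open>g \<otimes> t\<close>\<close>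
  have "inv s1 \<otimes> (g \<otimes> t) \<in> H" "inv s2 \<otimes> (g \<otimes> t) \<in> H"
    using source_block(2)[OF assms s(1)] source_block(2)[OF assms s(2)] s(3) G assms
    unfolding t_def by (auto simp: m_assoc)
  moreover have "\<exists>!s. s \<in> T \<and> inv s \<otimes> (g \<otimes> t) \<in> H"
    using transversal_unique G assms by simp
  ultimately show "s1 = s2" using s(1,2) by (elim ex1E) blast
qed

lemma source_block_image: "g \<in> carrier G \<Longrightarrow> source_block g ` T = T"
  by (intro endo_inj_surj[OF finite_T _ inj_on_source_block]) (auto intro: source_block(1))

lemma ind_action_apply:
  assumes "g \<in> carrier G" "s \<in> T"
  shows "ind_action G H \<rho> T g f s = \<rho> (inv s \<otimes> g \<otimes> source_block g s) (f (source_block g s))"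
proof -
  have "ind_action G H \<rho> T g f s
      = (\<Sum>t\<in>T. if inv s \<otimes> g \<otimes> t \<in> H then \<rho> (inv s \<otimes> g \<otimes> t) (f t) else 0)"
    unfolding ind_action_def by (simp only: assms(2) if_True)
  also have "\<dots> = (\<Sum>t\<in>T. if t = source_block g s then \<rho> (inv s \<otimes> g \<otimes> t) (f t) else 0)"
  proof (intro sum.cong refl)
    fix t assume "t \<in> T"
    then have "inv s \<otimes> g \<otimes> t \<in> H \<longleftrightarrow> t = source_block g s"
      using source_block(2)[OF assms] source_block_unique[OF assms] by blast
    then show "(if inv s \<otimes> g \<otimes> t \<in> H then \<rho> (inv s \<otimes> g \<otimes> t) (f t) else 0)
        = (if t = source_block g s then \<rho> (inv s \<otimes> g \<otimes> t) (f t) else 0)"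
      by (simp only:)
  qed
  finally show ?thesis using source_block(1)[OF assms] finite_T by simp
qed

lemma ind_inner_ind_action:
  assumes "g \<in> carrier G"
  shows "ind_inner T (ind_action G H \<rho> T g f) (ind_action G H \<rho> T g f') = ind_inner T f f'"
proof -
  have "ind_inner T (ind_action G H \<rho> T g f) (ind_action G H \<rho> T g f')
      = (\<Sum>s\<in>T. cinner (f (source_block g s)) (f' (source_block g s)))"
    unfolding ind_inner_def
    by (intro sum.cong refl) (simp add: ind_action_apply assms rho_cinner source_block(2))
  also have "\<dots> = (\<Sum>t\<in>source_block g ` T. cinner (f t) (f' t))"
    by (simp add: sum.reindex[OF inj_on_source_block[OF assms]])
  finally show ?thesis unfolding source_block_image[OF assms] ind_inner_def .
qed

lemma ind_action_shift:
  assumes "s \<in> T" "t \<in> T"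
  shows "ind_action G H \<rho> T (s \<otimes> inv t) f s = f t"
proof -
  have G: "s \<in> carrier G" "t \<in> carrier G" using assms T_subset by auto
  then have e: "inv s \<otimes> (s \<otimes> inv t) \<otimes> t = \<one>" by (simp add: m_assoc[symmetric])
  then have "source_block (s \<otimes> inv t) s = t"
    using source_block_unique[of "s \<otimes> inv t" s t] assms G subgroup.one_closed[OF subgroup_H]
    by simp
  then show ?thesis using ind_action_apply[of "s \<otimes> inv t" s f] assms G e rho_one by simp
qed

lemma ind_action_ind_tensor_base:
  assumes "k \<in> H"
  shows "ind_action G H \<rho> T (base_rep \<otimes> k \<otimes> inv base_rep) (ind_tensor base_rep y)
           = ind_tensor base_rep (\<rho> k y)"
proof
  fix s
  let ?b = base_rep and ?g = "base_rep \<otimes> k \<otimes> inv base_rep"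
  have b: "?b \<in> carrier G" and k: "k \<in> carrier G" using base_rep(2) assms H_subset by auto
  then have g: "?g \<in> carrier G" by simp
  have block: "source_block ?g s = ?b \<longleftrightarrow> s = ?b" if s: "s \<in> T"
  proof -
    have sG: "s \<in> carrier G" using s T_subset by blast
    have "inv s \<otimes> ?g \<otimes> ?b = (inv s \<otimes> ?b) \<otimes> k" using b k sG by (simp add: m_assoc)
    then have "inv s \<otimes> ?g \<otimes> ?b \<in> H \<longleftrightarrow> inv s \<otimes> ?b \<in> H"
      using mult_in_H_iff[OF _ assms] b sG by simp
    also have "\<dots> \<longleftrightarrow> s \<in> H"
      using mult_in_H_iff[OF _ base_rep(2)] inv_in_H_iff sG by simp
    also have "\<dots> \<longleftrightarrow> s = ?b" using s base_rep base_rep_unique by blast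
    finally show ?thesis using source_block_unique[OF g s base_rep(1)] source_block(2)[OF g s]
      by metis
  qed
  have conj: "inv ?b \<otimes> ?g \<otimes> ?b = k" using b k by (simp add: m_assoc[symmetric]) (simp add: m_assoc)
  show "ind_action G H \<rho> T ?g (ind_tensor ?b y) s = ind_tensor ?b (\<rho> k y) s"
  proof (cases "s \<in> T")
    case True
    then show ?thesis
      using ind_action_apply[OF g True] rho_zero[OF source_block(2)[OF g True]] block[OF True] conj
      by (auto simp: ind_tensor_def)
  next
    case False
    then show ?thesis using base_rep(1) by (auto simp: ind_action_def ind_tensor_def)
  qed
qed

end

lemma ind_proj_ind_scale: "ind_proj H (ind_scale c f) = ind_scale c (ind_proj H f)"
  by (simp add: ind_proj_def ind_scale_def cscale_def fun_eq_iff)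

subsection \<open>Invariant subspaces of the induced representation\<close>

locale induced_subrep = induced_rep G H \<rho> T
  for G :: "('g, 'b) monoid_scheme" (structure) and H
    and \<rho> :: "'g \<Rightarrow> ('n::finite \<Rightarrow> complex) \<Rightarrow> ('n \<Rightarrow> complex)" and T +
  fixes S :: "('g \<Rightarrow> 'n \<Rightarrow> complex) set"
  assumes finite_S: "finite S" and orthonormal_S: "orthonormal T S"
    and invariant: "\<And>g f. g \<in> carrier G \<Longrightarrow> f \<in> IS.span S \<Longrightarrow> ind_action G H \<rho> T g f \<in> IS.span S"
    and irreducible: "irreducible_rep H \<rho>"
begin

lemma orthonormal_ind_action_image:
  assumes "g \<in> carrier G"
  shows "orthonormal T (ind_action G H \<rho> T g ` S)" "inj_on (ind_action G H \<rho> T g) S"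
    and "ind_action G H \<rho> T g ` S \<subseteq> IS.span S"
  using orthonormal_image_unitary[OF orthonormal_S ind_inner_ind_action[OF assms]]
    invariant[OF assms] IS.span_base by auto

text \<open>The element \<open>s \<otimes> inv t\<close> carries the block of \<open>t\<close> onto the block of \<open>s\<close> and maps \<open>S\<close> to an
  orthonormal subset of \<open>span S\<close>.\<close>
lemma block_weight_le:
  assumes "s \<in> T" "t \<in> T"
  shows "block_weight S t \<le> block_weight S s"
proof -
  let ?U = "ind_action G H \<rho> T (s \<otimes> inv t)"
  have g: "s \<otimes> inv t \<in> carrier G" using assms T_subset by auto
  have "block_weight S t = (\<Sum>u\<in>S. cnorm2 (?U u s))"
    unfolding block_weight_def using ind_action_shift[OF assms] by simp
  also have "\<dots> = block_weight (?U ` S) s"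
    unfolding block_weight_def by (simp add: sum.reindex[OF orthonormal_ind_action_image(2)[OF g]])
  also have "\<dots> \<le> block_weight S s"
    using orthonormal_ind_action_image[OF g] finite_S orthonormal_S finite_T assms(1)
    by (intro block_weight_mono) auto
  finally show ?thesis .
qed

lemma card_T_mult_block_weight: "real (card T) * block_weight S base_rep = real (card S)"
proof -
  have "block_weight S t = block_weight S base_rep" if "t \<in> T" for t
    using block_weight_le[OF that base_rep(1)] block_weight_le[OF base_rep(1) that] by simp
  then show ?thesis using sum_block_weight[OF orthonormal_S] by simp
qed

lemma gram_form_base_rep:
  "gram_form S (\<lambda>u. u base_rep) y = (\<Sum>u\<in>S. (cmod (ind_inner T u (ind_tensor base_rep y)))\<^sup>2)"
  unfolding gram_form_def by (simp only: ind_inner_ind_tensor_right[OF finite_T base_rep(1)])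

lemma gram_form_base_rep_le:
  assumes "k \<in> H"
  shows "gram_form S (\<lambda>u. u base_rep) y \<le> gram_form S (\<lambda>u. u base_rep) (\<rho> k y)"
proof -
  define g where "g = base_rep \<otimes> k \<otimes> inv base_rep"
  let ?U = "ind_action G H \<rho> T g"
  have g: "g \<in> carrier G" unfolding g_def using base_rep(2) assms H_subset by auto
  have "gram_form S (\<lambda>u. u base_rep) y
      = (\<Sum>u\<in>S. (cmod (ind_inner T (?U u) (ind_tensor base_rep (\<rho> k y))))\<^sup>2)"
    unfolding gram_form_base_rep g_def
    by (simp add: ind_inner_ind_action g[unfolded g_def] flip: ind_action_ind_tensor_base[OF assms])
  also have "\<dots> = (\<Sum>w\<in>?U ` S. (cmod (ind_inner T w (ind_tensor base_rep (\<rho> k y))))\<^sup>2)"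
    by (simp add: sum.reindex[OF orthonormal_ind_action_image(2)[OF g]])
  also have "\<dots> \<le> gram_form S (\<lambda>u. u base_rep) (\<rho> k y)"
    unfolding gram_form_base_rep using orthonormal_ind_action_image[OF g]
    by (intro bessel_inequality_subspan finite_S orthonormal_S finite_imageI)
  finally show ?thesis .
qed

lemma gram_form_base_rep_invariant:
  assumes "k \<in> H"
  shows "gram_form S (\<lambda>u. u base_rep) (\<rho> k y) = gram_form S (\<lambda>u. u base_rep) y"
  using gram_form_base_rep_le[OF assms, of y]
    gram_form_base_rep_le[OF subgroup.m_inv_closed[OF subgroup_H assms], of "\<rho> k y"]
  by (simp add: rho_inv[OF assms])

definition dim_ratio :: real where
  "dim_ratio = real (card S) / (real (card T) * real CARD('n))"

text \<open>The compression of the projection onto \<open>span S\<close> to the block \<open>e \<otimes> Y\<close> is a scalar,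
  determined by its trace \<open>block_weight S base_rep\<close>.\<close>
lemma compression_eq_scalar:
  "gram_op S (\<lambda>u. u base_rep) y = cscale (complex_of_real dim_ratio) y"
  "gram_form S (\<lambda>u. u base_rep) y = dim_ratio * cnorm2 y"
proof -
  obtain \<kappa> where op: "\<And>y. gram_op S (\<lambda>u. u base_rep) y = cscale (complex_of_real \<kappa>) y"
    and form: "\<And>y. gram_form S (\<lambda>u. u base_rep) y = \<kappa> * cnorm2 y"
    using gram_op_scalar_if_invariant[OF irreducible rho_cnorm2 gram_form_base_rep_invariant] by blast
  have "(\<Sum>i\<in>UNIV. gram_form S (\<lambda>u. u base_rep) (unit_vec i)) = block_weight S base_rep"
    unfolding gram_form_def block_weight_def cnorm2_def cinner_unit_vec_right
    by (simp add: sum.swap[of _ S])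
  then have "\<kappa> * real CARD('n) = block_weight S base_rep" by (simp add: form mult.commute)
  then have "\<kappa> * (real (card T) * real CARD('n)) = real (card S)"
    using card_T_mult_block_weight by (metis mult.assoc mult.commute)
  moreover have "0 < card T" using base_rep(1) finite_T card_gt_0_iff by auto
  ultimately have "\<kappa> = dim_ratio" unfolding dim_ratio_def by (simp add: field_simps)
  then show "gram_op S (\<lambda>u. u base_rep) y = cscale (complex_of_real dim_ratio) y"
    "gram_form S (\<lambda>u. u base_rep) y = dim_ratio * cnorm2 y"
    using op form by simp_all
qed

lemma unit_vector_with_projection_weight:
  assumes "S \<noteq> {}"
  shows "\<exists>\<psi>\<in>IS.span S. ind_inner T \<psi> \<psi> = 1 \<and> ind_inner T \<psi> (ind_proj H \<psi>) = complex_of_real dim_ratio"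
proof -
  have "0 < card S" using assms finite_S by (simp add: card_gt_0_iff)
  moreover have "0 < card T" using base_rep(1) finite_T by (auto simp: card_gt_0_iff)
  ultimately have pos: "0 < dim_ratio" unfolding dim_ratio_def by simp
  define e :: "'n \<Rightarrow> complex" where "e = unit_vec undefined"
  define p where "p = orth_proj T S (ind_tensor base_rep e)"
  have e: "cnorm2 e = 1" unfolding e_def by (rule cnorm2_unit_vec)
  have "ind_norm2 T p = dim_ratio"
    unfolding p_def ind_norm2_orth_proj[OF finite_S orthonormal_S] gram_form_base_rep[symmetric]
      compression_eq_scalar e by simp
  then have pp: "ind_inner T p p = complex_of_real dim_ratio" by (simp only: ind_inner_self)
  have "p base_rep = gram_op S (\<lambda>u. u base_rep) e"
    unfolding p_def orth_proj_def gram_op_def sum_apply ind_scale_def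
    by (simp only: ind_inner_ind_tensor_right[OF finite_T base_rep(1)])
  then have "ind_inner T p (ind_proj H p)
      = cinner (cscale (complex_of_real dim_ratio) e) (cscale (complex_of_real dim_ratio) e)"
    unfolding ind_inner_ind_proj_right compression_eq_scalar by (simp only:)
  then have pEp: "ind_inner T p (ind_proj H p) = complex_of_real (dim_ratio * dim_ratio)"
    unfolding cinner_self cnorm2_scale e by (simp add: power2_eq_square)
  define \<psi> where "\<psi> = ind_scale (complex_of_real (1 / sqrt dim_ratio)) p"
  have "\<psi> \<in> IS.span S" unfolding \<psi>_def p_def by (intro IS.span_scale orth_proj_in_span)
  moreover have "ind_inner T \<psi> \<psi> = 1"
    unfolding \<psi>_def ind_inner_scale_inv_sqrt[OF pos] pp using pos by simp
  moreover have "ind_inner T \<psi> (ind_proj H \<psi>) = complex_of_real dim_ratio"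
    unfolding \<psi>_def ind_proj_ind_scale ind_inner_scale_inv_sqrt[OF pos] pEp using pos by simp
  ultimately show ?thesis by blast
qed

end

theorem proposition12:
  fixes G :: "('g, 'b) monoid_scheme"
    and H :: "'g set"
    and \<rho> :: "'g \<Rightarrow> ('n::finite \<Rightarrow> complex) \<Rightarrow> ('n \<Rightarrow> complex)"
    and T :: "'g set"
    and V :: "('g \<Rightarrow> 'n \<Rightarrow> complex) set"
  assumes "group G" and "finite (carrier G)" and "subgroup H G"
    and "unitary_rep G H \<rho>" and "irreducible_rep H \<rho>"
    and "left_transversal G H T"
    and "module.subspace ind_scale V" and "V \<subseteq> ind_space T"
    and "\<forall>g\<in>carrier G. \<forall>f\<in>V. ind_action G H \<rho> T g f \<in> V"
    and "V \<noteq> {0}"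
  shows "\<exists>\<psi>\<in>V. ind_inner T \<psi> \<psi> = 1 \<and>
           ind_inner T \<psi> (ind_proj H \<psi>) =
             complex_of_real (real (vector_space.dim ind_scale V)
                              / real (vector_space.dim ind_scale (ind_space T :: ('g \<Rightarrow> 'n \<Rightarrow> complex) set)))"
proof -
  interpret induced_rep G H \<rho> T
    by (intro induced_rep.intro induced_rep_axioms.intro) (fact assms)+
  obtain S where S: "finite S" "orthonormal T S" "IS.span S = V"
    using orthonormal_basis_exists[OF finite_T assms(7,8)] .
  interpret induced_subrep G H \<rho> T S
    by unfold_locales (use S assms(5,9) in auto)
  have "card S = IS.dim V"
    using IS.basis_card_eq_dim[OF _ _ orthonormal_independent[OF S(2)]] S(3) IS.span_superset
    by blast
  moreover have "S \<noteq> {}" using S(3) assms(10) by auto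
  moreover have "IS.dim (ind_space T :: ('g \<Rightarrow> 'n \<Rightarrow> complex) set) = card T * CARD('n)"
    by (rule dim_ind_space[OF finite_T])
  ultimately show ?thesis using unit_vector_with_projection_weight S(3) by (simp add: dim_ratio_def)
qed

end
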